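(* Let $(X,d)$ be a complete metric space and $(\mathbb{H}(X),h)$ the space of nonempty compact subsets of $X$ with the Hausdorff metric. For each $i\in\mathbb{N}$ let $\mathcal{F}_i=\{X; f_{1,i},\dots,f_{n,i}\}$ be a family of $n$ Lipschitz maps $f_{r,i}:X\to X$, with set map $\mathcal{F}_i(A)=\bigcup_{r=1}^n f_{r,i}(A)$, and suppose $\lim_{k\to\infty}\prod_{i=1}^k L_{\mathcal{F}_i}=0$ where $L_{\mathcal{F}_i}=\max_r\mathrm{Lip}(f_{r,i})$. Let $\mathcal{F}=\{X; f_1,\dots,f_n\}$ with set map $\mathcal{F}(A)=\bigcup_{r=1}^n f_r(A)$. Assume there exists a compact set $C\subseteq X$ with $f_{r,i}(C)\subseteq C$ for all $r,i$, that for each $r$ the sequence $f_{r,i}$ converges uniformly on $C$ to $f_r$ as $i\to\infty$, and that $L_{\mathcal{F}}=\max_r\mathrm{Lip}(f_r)<1$. Then for every nonempty compact $A\subseteq C$, the forward trajectory $\mathcal{F}_k\circ\mathcal{F}_{k-1}\circ\cdots\circ\mathcal{F}_1(A)$ converges in $(\mathbb{H}(X),h)$ to the unique attractor of $\mathcal{F}$, i.e., the unique $A_{\mathcal{F}}\in\mathbb{H}(X)$ with $\mathcal{F}(A_{\mathcal{F}})=A_{\mathcal{F}}$.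
   Context: The Hausdorff metric is $h(B,C)=\max\{d(B,C),d(C,B)\}$ with $d(B,C)=\sup_{b\in B}\inf_{c\in C}d(b,c)$. *)

theory Defs
  imports "HOL-Analysis.Analysis"
begin

text \<open>Directed Hausdorff distance d(B,C) = sup over b in B of inf over c in C of dist b c,
  and the Hausdorff metric h(B,C) = max (d(B,C)) (d(C,B)).  Intended for nonempty compact sets.\<close>
definition hdist_dir :: "'a::metric_space set \<Rightarrow> 'a set \<Rightarrow> real" where
  "hdist_dir B C = (SUP b\<in>B. INF c\<in>C. dist b c)"

definition hausdorff_metric :: "'a::metric_space set \<Rightarrow> 'a set \<Rightarrow> real" where
  "hausdorff_metric B C = max (hdist_dir B C) (hdist_dir C B)"

definition Lip :: "('a::metric_space \<Rightarrow> 'b::metric_space) \<Rightarrow> real" where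
  "Lip f = Inf {L. L-lipschitz_on UNIV f}"

definition set_map :: "nat \<Rightarrow> (nat \<Rightarrow> 'a \<Rightarrow> 'a) \<Rightarrow> 'a set \<Rightarrow> 'a set" where
  "set_map n f A = (\<Union>r<n. f r ` A)"

text \<open>Forward trajectory F_k o ... o F_1 (A); the families are indexed by i = 1, 2, ...;
  fs r i is the r-th map of the i-th family.\<close>
primrec forward_traj :: "nat \<Rightarrow> (nat \<Rightarrow> nat \<Rightarrow> 'a \<Rightarrow> 'a) \<Rightarrow> nat \<Rightarrow> 'a set \<Rightarrow> 'a set" where
  "forward_traj n fs 0 A = A"
| "forward_traj n fs (Suc k) A = set_map n (\<lambda>r. fs r (Suc k)) (forward_traj n fs k A)"

end

theory Submission
  imports Defs
begin

text \<open>
  F is a contraction with ratio L < 1 for the Hausdorff metric h, so it has at most one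
  nonempty compact fixed set; one exists because the closure of the orbit of any point is a
  compact F-invariant set, and the intersection of its images under the iterates of F is fixed.
  For the trajectory T_k, uniform convergence on the invariant set C gives, for every
  \<delta> > 0 and all large k, h(T_(k+1), A_F) = h(F_(k+1)(T_k), F(A_F)) \<le> \<delta> + L h(T_k, A_F),
  and an eventually contracting sequence of this kind tends to 0.
\<close>

lemma lipschitz_on_Lip:
  fixes g :: "'a::metric_space \<Rightarrow> 'b::metric_space"
  assumes "\<exists>L. L-lipschitz_on UNIV g"
  shows "(Lip g)-lipschitz_on UNIV g"
proof -
  let ?S = "{L. L-lipschitz_on UNIV g}"
  have "?S \<noteq> {}"
    using assms by blast
  have "0 \<le> Lip g"
    unfolding Lip_def by (rule cInf_greatest[OF \<open>?S \<noteq> {}\<close>]) (auto simp: lipschitz_on_nonneg)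
  moreover have "dist (g x) (g y) \<le> Lip g * dist x y" for x y
  proof (cases "x = y")
    case False
    then have "0 < dist x y" by simp
    have "dist (g x) (g y) / dist x y \<le> Lip g"
      unfolding Lip_def
    proof (rule cInf_greatest[OF \<open>?S \<noteq> {}\<close>])
      fix L assume "L \<in> ?S"
      then show "dist (g x) (g y) / dist x y \<le> L"
        using \<open>0 < dist x y\<close> by (auto simp: divide_le_eq dest: lipschitz_onD)
    qed
    then show ?thesis
      using \<open>0 < dist x y\<close> by (simp add: divide_le_eq)
  qed simp
  ultimately show ?thesis
    by (intro lipschitz_onI)
qed

lemma eventually_contracting_imp_tendsto_zero:
  fixes a :: "nat \<Rightarrow> real"
  assumes nonneg: "\<And>k. 0 \<le> a k" and "0 \<le> L" "L < 1"
    and step: "\<And>\<delta>. 0 < \<delta> \<Longrightarrow> \<forall>\<^sub>F k in sequentially. a (Suc k) \<le> \<delta> + L * a k"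
  shows "a \<longlonglongrightarrow> 0"
proof (rule LIMSEQ_I)
  fix e :: real assume "0 < e"
  define \<delta> where "\<delta> = e * (1 - L) / 2"
  have "0 < \<delta>"
    unfolding \<delta>_def using \<open>0 < e\<close> \<open>L < 1\<close> by simp
  then obtain N where N: "\<And>k. N \<le> k \<Longrightarrow> a (Suc k) \<le> \<delta> + L * a k"
    using step by (auto simp: eventually_sequentially)
  have bound: "a (N + j) \<le> e / 2 + L ^ j * a N" for j
  proof (induction j)
    case 0
    show ?case using \<open>0 < e\<close> by simp
  next
    case (Suc j)
    have "a (N + Suc j) \<le> \<delta> + L * a (N + j)"
      using N by simp
    also have "\<dots> \<le> \<delta> + L * (e / 2 + L ^ j * a N)"
      using Suc.IH \<open>0 \<le> L\<close> by (simp add: mult_left_mono)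
    also have "\<dots> = e / 2 + L ^ Suc j * a N"
      unfolding \<delta>_def by (simp add: field_simps)
    finally show ?case .
  qed
  have "(\<lambda>j. L ^ j * a N) \<longlonglongrightarrow> 0"
    using \<open>0 \<le> L\<close> \<open>L < 1\<close> by (intro tendsto_mult_left_zero LIMSEQ_power_zero) simp
  then have "\<forall>\<^sub>F j in sequentially. L ^ j * a N < e / 2"
    by (rule order_tendstoD(2)) (use \<open>0 < e\<close> in simp)
  then obtain J where J: "\<And>j. J \<le> j \<Longrightarrow> L ^ j * a N < e / 2"
    by (auto simp: eventually_sequentially)
  have "norm (a k - 0) < e" if "N + J \<le> k" for k
  proof -
    have "a k \<le> e / 2 + L ^ (k - N) * a N"
      using bound[of "k - N"] that by simp
    also have "\<dots> < e"
      using J[of "k - N"] that by linarith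
    finally show ?thesis
      using nonneg[of k] by simp
  qed
  then show "\<exists>K. \<forall>k\<ge>K. norm (a k - 0) < e"
    by blast
qed

lemma hausdorff_metric_commute: "hausdorff_metric A B = hausdorff_metric B A"
  by (simp add: hausdorff_metric_def max.commute)

lemma hdist_dir_le:
  fixes A B :: "'a::metric_space set"
  assumes "A \<noteq> {}" "\<And>a. a \<in> A \<Longrightarrow> \<exists>b\<in>B. dist a b \<le> e"
  shows "hdist_dir A B \<le> e"
  unfolding hdist_dir_def
proof (rule cSUP_least[OF \<open>A \<noteq> {}\<close>])
  fix a assume "a \<in> A"
  then obtain b where b: "b \<in> B" "dist a b \<le> e" using assms(2) by blast
  have "bdd_below (dist a ` B)"
    by (rule bdd_belowI2[of _ 0]) simp
  then show "(INF b\<in>B. dist a b) \<le> e"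
    using b by (rule cINF_lower2)
qed

lemma hausdorff_metric_le:
  fixes A B :: "'a::metric_space set"
  assumes "A \<noteq> {}" "B \<noteq> {}"
    and "\<And>a. a \<in> A \<Longrightarrow> \<exists>b\<in>B. dist a b \<le> e" "\<And>b. b \<in> B \<Longrightarrow> \<exists>a\<in>A. dist b a \<le> e"
  shows "hausdorff_metric A B \<le> e"
  using assms by (simp add: hausdorff_metric_def hdist_dir_le)

lemma hdist_dir_witness:
  fixes A B :: "'a::metric_space set"
  assumes "compact A" "compact B" "B \<noteq> {}" "a \<in> A"
  obtains b where "b \<in> B" "dist a b \<le> hdist_dir A B"
proof -
  obtain b where b: "b \<in> B" "\<And>y. y \<in> B \<Longrightarrow> dist a b \<le> dist a y"
    using continuous_attains_inf[OF \<open>compact B\<close> \<open>B \<noteq> {}\<close>, of "dist a"]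
      continuous_on_dist[OF continuous_on_const continuous_on_id, of B a] by auto
  have "dist a b \<le> (INF y\<in>B. dist a y)"
    by (rule cINF_greatest[OF \<open>B \<noteq> {}\<close> b(2)])
  then have "dist a b \<le> infdist a B"
    using \<open>B \<noteq> {}\<close> by (simp add: infdist_def)
  also have "\<dots> \<le> (SUP x\<in>A. infdist x B)"
  proof (rule cSUP_upper[OF \<open>a \<in> A\<close>])
    have "compact ((\<lambda>x. infdist x B) ` A)"
      using continuous_on_infdist[OF continuous_on_id] \<open>compact A\<close>
      by (rule compact_continuous_image)
    then show "bdd_above ((\<lambda>x. infdist x B) ` A)"
      by (simp add: bounded_imp_bdd_above compact_imp_bounded)
  qed
  also have "\<dots> = hdist_dir A B"
    using \<open>B \<noteq> {}\<close> by (simp add: hdist_dir_def infdist_def)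
  finally show ?thesis using that b(1) by blast
qed

lemma hausdorff_metric_witness:
  fixes A B :: "'a::metric_space set"
  assumes "compact A" "compact B" "B \<noteq> {}" "a \<in> A"
  obtains b where "b \<in> B" "dist a b \<le> hausdorff_metric A B"
proof -
  obtain b where b: "b \<in> B" "dist a b \<le> hdist_dir A B"
    using hdist_dir_witness[OF assms] .
  have "hdist_dir A B \<le> hausdorff_metric A B"
    by (simp add: hausdorff_metric_def)
  with b that show ?thesis by force
qed

lemma hausdorff_metric_nonneg:
  fixes A B :: "'a::metric_space set"
  assumes "compact A" "compact B" "A \<noteq> {}" "B \<noteq> {}"
  shows "0 \<le> hausdorff_metric A B"
proof -
  obtain a where "a \<in> A" using \<open>A \<noteq> {}\<close> by blast
  then obtain b where "dist a b \<le> hausdorff_metric A B"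
    using hausdorff_metric_witness[OF assms(1,2,4)] by blast
  then show ?thesis using zero_le_dist order_trans by blast
qed

lemma hausdorff_metric_le_0_imp_eq:
  fixes A B :: "'a::metric_space set"
  assumes "compact A" "compact B" "A \<noteq> {}" "B \<noteq> {}" "hausdorff_metric A B \<le> 0"
  shows "A = B"
proof -
  have sub: "X \<subseteq> Y"
    if XY: "compact X" "compact Y" "Y \<noteq> {}" "hausdorff_metric X Y \<le> 0" for X Y :: "'a set"
  proof
    fix x assume "x \<in> X"
    then obtain y where "y \<in> Y" "dist x y \<le> hausdorff_metric X Y"
      using hausdorff_metric_witness[OF XY(1-3)] by blast
    with XY(4) show "x \<in> Y" by (metis dist_le_zero_iff order_trans)
  qed
  show ?thesis
    using sub[of A B] sub[of B A] assms by (auto simp: hausdorff_metric_commute)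
qed

lemma set_map_eq_empty_iff [simp]: "set_map n g A = {} \<longleftrightarrow> n = 0 \<or> A = {}"
  unfolding set_map_def by auto

lemma set_map_mono: "A \<subseteq> B \<Longrightarrow> set_map n g A \<subseteq> set_map n g B"
  unfolding set_map_def by blast

lemma compact_set_map:
  assumes "compact A" "\<And>r. r < n \<Longrightarrow> continuous_on A (g r)"
  shows "compact (set_map n g A)"
  unfolding set_map_def using assms
  by (intro compact_UN finite_lessThan compact_continuous_image) auto

lemma hausdorff_metric_set_map_le:
  fixes A B :: "'a::metric_space set"
  assumes "compact A" "compact B" "A \<noteq> {}" "B \<noteq> {}" "0 < n" "0 \<le> L"
    and close: "\<And>r a b. r < n \<Longrightarrow> a \<in> A \<Longrightarrow> b \<in> B \<Longrightarrow> dist (g r a) (h r b) \<le> \<delta> + L * dist a b"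
  shows "hausdorff_metric (set_map n g A) (set_map n h B) \<le> \<delta> + L * hausdorff_metric A B"
proof (rule hausdorff_metric_le)
  show "set_map n g A \<noteq> {}" "set_map n h B \<noteq> {}"
    using assms(3-5) by auto
next
  fix y assume "y \<in> set_map n g A"
  then obtain r a where ra: "r < n" "a \<in> A" "y = g r a"
    unfolding set_map_def by blast
  obtain b where b: "b \<in> B" "dist a b \<le> hausdorff_metric A B"
    using hausdorff_metric_witness[OF assms(1,2,4) ra(2)] .
  have "dist (g r a) (h r b) \<le> \<delta> + L * dist a b"
    using close ra b by blast
  also have "\<dots> \<le> \<delta> + L * hausdorff_metric A B"
    using b \<open>0 \<le> L\<close> by (simp add: mult_left_mono)
  finally show "\<exists>z\<in>set_map n h B. dist y z \<le> \<delta> + L * hausdorff_metric A B"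
    using ra b unfolding set_map_def by blast
next
  fix y assume "y \<in> set_map n h B"
  then obtain r b where rb: "r < n" "b \<in> B" "y = h r b"
    unfolding set_map_def by blast
  obtain a where a: "a \<in> A" "dist b a \<le> hausdorff_metric A B"
    using hausdorff_metric_witness[OF assms(2,1,3) rb(2)] by (auto simp: hausdorff_metric_commute)
  have "dist (h r b) (g r a) \<le> \<delta> + L * dist a b"
    using close rb a by (simp add: dist_commute)
  also have "\<dots> \<le> \<delta> + L * hausdorff_metric A B"
    using a \<open>0 \<le> L\<close> by (simp add: mult_left_mono dist_commute)
  finally show "\<exists>z\<in>set_map n g A. dist y z \<le> \<delta> + L * hausdorff_metric A B"
    using rb a unfolding set_map_def by blast
qed

lemma set_map_fixed_set_unique:
  fixes f :: "nat \<Rightarrow> 'a::metric_space \<Rightarrow> 'a"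
  assumes B: "compact B" "B \<noteq> {}" "set_map n f B = B"
    and K: "compact K" "K \<noteq> {}" "set_map n f K = K"
    and lip: "\<And>r. r < n \<Longrightarrow> L-lipschitz_on UNIV (f r)" and "L < 1"
  shows "B = K"
proof -
  have "0 < n"
    using B(2,3) set_map_eq_empty_iff[of n f B] by auto
  then have "0 \<le> L" using lip lipschitz_on_nonneg by blast
  have "hausdorff_metric B K = hausdorff_metric (set_map n f B) (set_map n f K)"
    using B K by simp
  also have "\<dots> \<le> 0 + L * hausdorff_metric B K"
  proof (rule hausdorff_metric_set_map_le)
    fix r a b assume "r < n"
    then show "dist (f r a) (f r b) \<le> 0 + L * dist a b"
      using lipschitz_onD[OF lip] by simp
  qed (use B K \<open>0 < n\<close> \<open>0 \<le> L\<close> in auto)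
  finally have "(1 - L) * hausdorff_metric B K \<le> 0"
    by (simp add: algebra_simps)
  then have "hausdorff_metric B K \<le> 0"
    using \<open>L < 1\<close> by (simp add: mult_le_0_iff)
  then show ?thesis
    using hausdorff_metric_le_0_imp_eq B K by blast
qed

lemma decseq_compact_Inter_nonempty:
  fixes D :: "nat \<Rightarrow> 'a::t2_space set"
  assumes "\<And>k. compact (D k)" "\<And>k. D k \<noteq> {}" "decseq D"
  shows "(\<Inter>k. D k) \<noteq> {}"
proof (rule compact_space_imp_nest[of "top_of_set (D 0)"])
  show "compact_space (top_of_set (D 0))"
    using assms(1) by (simp add: compact_space_subtopology)
  show "closedin (top_of_set (D 0)) (D k)" for k
    using assms(1,3) by (intro closed_subset compact_imp_closed) (auto simp: decseq_def)
qed (use assms in auto)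

lemma image_Inter_decseq_compact:
  fixes g :: "'a::t2_space \<Rightarrow> 'b::t1_space"
  assumes "\<And>k. compact (D k)" "decseq D" "continuous_on UNIV g"
  shows "g ` (\<Inter>k. D k) = (\<Inter>k. g ` D k)"
proof
  show "(\<Inter>k. g ` D k) \<subseteq> g ` (\<Inter>k. D k)"
  proof
    fix y assume y: "y \<in> (\<Inter>k. g ` D k)"
    have "compact (D k \<inter> g -` {y})" for k
      using assms(1) closed_vimage[OF closed_singleton assms(3)] by (rule compact_Int_closed)
    moreover have "D k \<inter> g -` {y} \<noteq> {}" for k
      using y by blast
    moreover have "decseq (\<lambda>k. D k \<inter> g -` {y})"
      using assms(2) by (auto simp: decseq_def)
    ultimately obtain x where "x \<in> (\<Inter>k. D k \<inter> g -` {y})"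
      by (metis decseq_compact_Inter_nonempty ex_in_conv)
    then show "y \<in> g ` (\<Inter>k. D k)" by blast
  qed
qed blast

lemma Inter_UN_decseq_finite:
  assumes "finite I" "\<And>i. i \<in> I \<Longrightarrow> decseq (X i)"
  shows "(\<Inter>k. \<Union>i\<in>I. X i k) = (\<Union>i\<in>I. \<Inter>k. X i k)"
proof
  show "(\<Inter>k. \<Union>i\<in>I. X i k) \<subseteq> (\<Union>i\<in>I. \<Inter>k. X i k)"
  proof (rule subsetI, rule ccontr)
    fix y assume y: "y \<in> (\<Inter>k. \<Union>i\<in>I. X i k)" and "y \<notin> (\<Union>i\<in>I. \<Inter>k. X i k)"
    then have "\<forall>i\<in>I. \<exists>k. y \<notin> X i k"
      by blast
    then obtain k where k: "\<forall>i\<in>I. y \<notin> X i (k i)"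
      by metis
    define m where "m = Max (k ` I)"
    obtain i where i: "i \<in> I" "y \<in> X i m"
      using y by blast
    have "k i \<le> m"
      using assms(1) i(1) by (simp add: m_def)
    then have "X i m \<subseteq> X i (k i)"
      by (rule decseqD[OF assms(2)[OF i(1)]])
    with i k show False by blast
  qed
qed blast

lemma set_map_Inter_decseq:
  fixes f :: "nat \<Rightarrow> 'a::t2_space \<Rightarrow> 'a"
  assumes "\<And>k. compact (D k)" "decseq D" "\<And>r. r < n \<Longrightarrow> continuous_on UNIV (f r)"
  shows "set_map n f (\<Inter>k. D k) = (\<Inter>k. set_map n f (D k))"
proof -
  have "set_map n f (\<Inter>k. D k) = (\<Union>r<n. \<Inter>k. f r ` D k)"
    unfolding set_map_def using assms by (simp add: image_Inter_decseq_compact)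
  also have "\<dots> = (\<Inter>k. \<Union>r<n. f r ` D k)"
    using assms(2) by (intro Inter_UN_decseq_finite[symmetric]) (auto simp: decseq_def)
  finally show ?thesis
    unfolding set_map_def .
qed

lemma set_map_fixed_set_from_invariant:
  fixes f :: "nat \<Rightarrow> 'a::t2_space \<Rightarrow> 'a"
  assumes D: "compact D" "D \<noteq> {}" "set_map n f D \<subseteq> D" and "0 < n"
    and cont: "\<And>r. r < n \<Longrightarrow> continuous_on UNIV (f r)"
  obtains K where "compact K" "K \<noteq> {}" "set_map n f K = K"
proof -
  define Dk where "Dk k = (set_map n f ^^ k) D" for k
  have Dk_Suc: "Dk (Suc k) = set_map n f (Dk k)" for k
    by (simp add: Dk_def)
  have Dk: "compact (Dk k) \<and> Dk k \<noteq> {}" for k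
    by (induction k) (use D \<open>0 < n\<close> in \<open>auto simp: Dk_def Dk_Suc[unfolded Dk_def]
      intro!: compact_set_map continuous_on_subset[OF cont]\<close>)
  have Dk_Suc_subset: "Dk (Suc k) \<subseteq> Dk k" for k
  proof (induction k)
    case 0
    show ?case using D(3) by (simp add: Dk_def)
  next
    case (Suc k)
    show ?case using set_map_mono[OF Suc.IH] by (simp only: Dk_Suc)
  qed
  then have "decseq Dk"
    by (rule decseq_SucI)
  define K where "K = (\<Inter>k. Dk k)"
  have "set_map n f K = (\<Inter>k. Dk (Suc k))"
    unfolding K_def Dk_Suc using Dk \<open>decseq Dk\<close> cont by (simp add: set_map_Inter_decseq)
  also have "\<dots> = K"
    unfolding K_def using Dk_Suc_subset by blast
  finally have "set_map n f K = K" .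
  moreover have "K \<noteq> {}"
    unfolding K_def using Dk \<open>decseq Dk\<close> by (simp add: decseq_compact_Inter_nonempty)
  moreover have "compact K"
  proof -
    have "compact (Dk 0 \<inter> K)"
      unfolding K_def using Dk by (intro compact_Int_closed closed_INT) (auto simp: compact_imp_closed)
    moreover have "Dk 0 \<inter> K = K"
      unfolding K_def by blast
    ultimately show ?thesis by simp
  qed
  ultimately show ?thesis using that by blast
qed

inductive_set orbit :: "nat \<Rightarrow> (nat \<Rightarrow> 'a \<Rightarrow> 'a) \<Rightarrow> 'a \<Rightarrow> 'a set" for n f p where
  base: "p \<in> orbit n f p"
| step: "x \<in> orbit n f p \<Longrightarrow> r < n \<Longrightarrow> f r x \<in> orbit n f p"

lemma set_map_orbit_subset: "set_map n f (orbit n f p) \<subseteq> orbit n f p"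
  unfolding set_map_def by (auto intro: orbit.step)

lemma orbit_subset_cball:
  fixes f :: "nat \<Rightarrow> 'a::metric_space \<Rightarrow> 'a"
  assumes lip: "\<And>r. r < n \<Longrightarrow> L-lipschitz_on UNIV (f r)" and "0 \<le> R"
    and R: "\<And>r. r < n \<Longrightarrow> dist p (f r p) \<le> (1 - L) * R"
  shows "orbit n f p \<subseteq> cball p R"
proof
  fix x assume "x \<in> orbit n f p"
  then show "x \<in> cball p R"
  proof (induction rule: orbit.induct)
    case base
    show ?case using \<open>0 \<le> R\<close> by simp
  next
    case (step x r)
    have "dist p (f r x) \<le> dist p (f r p) + dist (f r p) (f r x)"
      by (rule dist_triangle)
    also have "\<dots> \<le> (1 - L) * R + L * dist p x"
      using R[OF \<open>r < n\<close>] lipschitz_onD[OF lip[OF \<open>r < n\<close>]] by (simp add: add_mono)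
    also have "\<dots> \<le> (1 - L) * R + L * R"
      using step lipschitz_on_nonneg[OF lip[OF \<open>r < n\<close>]] by (simp add: mult_left_mono)
    finally show ?case by (simp add: algebra_simps)
  qed
qed

lemma orbit_finite_cover:
  fixes f :: "nat \<Rightarrow> 'a::metric_space \<Rightarrow> 'a"
  assumes lip: "\<And>r. r < n \<Longrightarrow> L-lipschitz_on UNIV (f r)" and "0 \<le> L"
    and R: "orbit n f p \<subseteq> cball p R"
  shows "\<exists>S. finite S \<and> orbit n f p \<subseteq> (\<Union>s\<in>S. cball s (L ^ m * R))"
proof (induction m)
  case 0
  show ?case using R by (intro exI[of _ "{p}"]) simp
next
  \<comment> \<open>the images of an \<open>L ^ m * R\<close>-net under the maps, together with \<open>p\<close>, form an \<open>L ^ Suc m * R\<close>-net\<close>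
  case (Suc m)
  then obtain S where S: "finite S" "orbit n f p \<subseteq> (\<Union>s\<in>S. cball s (L ^ m * R))"
    by blast
  have "0 \<le> R"
    using R orbit.base by fastforce
  have "orbit n f p \<subseteq> (\<Union>s\<in>insert p (set_map n f S). cball s (L ^ Suc m * R))"
  proof
    fix x assume "x \<in> orbit n f p"
    then show "x \<in> (\<Union>s\<in>insert p (set_map n f S). cball s (L ^ Suc m * R))"
    proof cases
      case base
      then show ?thesis using \<open>0 \<le> L\<close> \<open>0 \<le> R\<close> by simp
    next
      case (step y r)
      obtain s where s: "s \<in> S" "dist s y \<le> L ^ m * R"
        using S(2) step(2) by auto
      have "dist (f r s) x \<le> L * dist s y"
        using step lipschitz_onD[OF lip[OF \<open>r < n\<close>]] by simp
      also have "\<dots> \<le> L ^ Suc m * R"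
        using mult_left_mono[OF s(2) \<open>0 \<le> L\<close>] by (simp add: mult.assoc)
      finally have "x \<in> cball (f r s) (L ^ Suc m * R)"
        by simp
      moreover have "f r s \<in> set_map n f S"
        using s step unfolding set_map_def by blast
      ultimately show ?thesis by blast
    qed
  qed
  moreover have "finite (insert p (set_map n f S))"
    using S(1) by (simp add: set_map_def)
  ultimately show ?case by blast
qed

lemma compact_closure_orbit:
  fixes f :: "nat \<Rightarrow> 'a::complete_space \<Rightarrow> 'a"
  assumes lip: "\<And>r. r < n \<Longrightarrow> L-lipschitz_on UNIV (f r)" and "0 \<le> L" "L < 1"
    and R: "orbit n f p \<subseteq> cball p R"
  shows "compact (closure (orbit n f p))"
  unfolding compact_eq_totally_bounded
proof (intro conjI allI impI)
  show "complete (closure (orbit n f p))"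
    by (simp add: complete_eq_closed)
next
  fix e :: real assume "0 < e"
  have "(\<lambda>m. L ^ m * R) \<longlonglongrightarrow> 0"
    using assms(2,3) by (intro tendsto_mult_left_zero LIMSEQ_power_zero) simp
  then have "\<forall>\<^sub>F m in sequentially. L ^ m * R < e"
    using \<open>0 < e\<close> by (rule order_tendstoD(2))
  then obtain m where m: "L ^ m * R < e"
    by (auto simp: eventually_sequentially)
  obtain S where S: "finite S" "orbit n f p \<subseteq> (\<Union>s\<in>S. cball s (L ^ m * R))"
    using orbit_finite_cover[OF lip assms(2) R] by blast
  have "closure (orbit n f p) \<subseteq> (\<Union>s\<in>S. cball s (L ^ m * R))"
    using S by (intro closure_minimal closed_UN) auto
  also have "\<dots> \<subseteq> (\<Union>s\<in>S. ball s e)"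
    using m by (intro UN_mono) auto
  finally show "\<exists>S. finite S \<and> closure (orbit n f p) \<subseteq> (\<Union>s\<in>S. ball s e)"
    using S(1) by blast
qed

lemma set_map_closure_subset:
  assumes "set_map n f X \<subseteq> X" "\<And>r. r < n \<Longrightarrow> continuous_on UNIV (f r)"
  shows "set_map n f (closure X) \<subseteq> closure X"
  unfolding set_map_def
proof (intro UN_least)
  fix r assume "r \<in> {..<n}"
  then have "f r ` X \<subseteq> closure X"
    using assms(1) closure_subset unfolding set_map_def by blast
  then show "f r ` closure X \<subseteq> closure X"
    using \<open>r \<in> {..<n}\<close> assms(2) by (intro image_closure_subset) (auto intro: continuous_on_subset)
qed

lemma set_map_fixed_set_exists:
  fixes f :: "nat \<Rightarrow> 'a::complete_space \<Rightarrow> 'a"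
  assumes "0 < n" and lip: "\<And>r. r < n \<Longrightarrow> L-lipschitz_on UNIV (f r)" and "L < 1"
  obtains K where "compact K" "K \<noteq> {}" "set_map n f K = K"
proof -
  have "0 \<le> L"
    using lip lipschitz_on_nonneg \<open>0 < n\<close> by blast
  have cont: "continuous_on UNIV (f r)" if "r < n" for r
    using lip[OF that] by (rule lipschitz_on_continuous_on)
  obtain p :: 'a where True by blast
  define M where "M = Max ((\<lambda>r. dist p (f r p)) ` {..<n})"
  have M: "dist p (f r p) \<le> M" if "r < n" for r
    unfolding M_def using that by simp
  define R where "R = M / (1 - L)"
  have "0 \<le> R"
    unfolding R_def using order_trans[OF zero_le_dist M[OF \<open>0 < n\<close>]] \<open>L < 1\<close> by simp
  have "dist p (f r p) \<le> (1 - L) * R" if "r < n" for r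
    unfolding R_def using M[OF that] \<open>L < 1\<close> by simp
  with lip \<open>0 \<le> R\<close> have R: "orbit n f p \<subseteq> cball p R"
    by (rule orbit_subset_cball)
  show ?thesis
  proof (rule set_map_fixed_set_from_invariant[OF _ _ _ \<open>0 < n\<close> cont])
    show "compact (closure (orbit n f p))"
      using compact_closure_orbit[OF lip \<open>0 \<le> L\<close> \<open>L < 1\<close> R] .
    show "closure (orbit n f p) \<noteq> {}"
      using orbit.base[of p n f] closure_subset by blast
    show "set_map n f (closure (orbit n f p)) \<subseteq> closure (orbit n f p)"
      using set_map_orbit_subset cont by (rule set_map_closure_subset)
  qed (use that in auto)
qed

lemma forward_traj_compact_subset:
  fixes fs :: "nat \<Rightarrow> nat \<Rightarrow> 'a::metric_space \<Rightarrow> 'a"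
  assumes "compact A" "A \<noteq> {}" "A \<subseteq> C" "0 < n"
    and cont: "\<And>r i. r < n \<Longrightarrow> 1 \<le> i \<Longrightarrow> continuous_on C (fs r i)"
    and inv: "\<And>r i. r < n \<Longrightarrow> 1 \<le> i \<Longrightarrow> fs r i ` C \<subseteq> C"
  shows "compact (forward_traj n fs k A) \<and> forward_traj n fs k A \<noteq> {} \<and> forward_traj n fs k A \<subseteq> C"
proof (induction k)
  case 0
  show ?case using assms(1-3) by simp
next
  case (Suc k)
  then have "compact (set_map n (\<lambda>r. fs r (Suc k)) (forward_traj n fs k A))"
    using cont by (intro compact_set_map) (auto intro: continuous_on_subset)
  moreover have "set_map n (\<lambda>r. fs r (Suc k)) (forward_traj n fs k A) \<subseteq> C"
    using Suc inv unfolding set_map_def by fastforce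
  ultimately show ?case
    using Suc \<open>0 < n\<close> by simp
qed

lemma forward_traj_tendsto_fixed_set:
  fixes fs :: "nat \<Rightarrow> nat \<Rightarrow> 'a::metric_space \<Rightarrow> 'a"
  assumes K: "compact K" "K \<noteq> {}" "set_map n f K = K"
    and A: "compact A" "A \<noteq> {}" "A \<subseteq> C" and "0 < n"
    and cont: "\<And>r i. r < n \<Longrightarrow> 1 \<le> i \<Longrightarrow> continuous_on C (fs r i)"
    and inv: "\<And>r i. r < n \<Longrightarrow> 1 \<le> i \<Longrightarrow> fs r i ` C \<subseteq> C"
    and unif: "\<And>r. r < n \<Longrightarrow> uniform_limit C (\<lambda>i. fs r i) (f r) sequentially"
    and lip: "\<And>r. r < n \<Longrightarrow> L-lipschitz_on UNIV (f r)" and "L < 1"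
  shows "(\<lambda>k. hausdorff_metric (forward_traj n fs k A) K) \<longlonglongrightarrow> 0"
proof (rule eventually_contracting_imp_tendsto_zero)
  let ?T = "\<lambda>k. forward_traj n fs k A"
  have T: "compact (?T k)" "?T k \<noteq> {}" "?T k \<subseteq> C" for k
    using forward_traj_compact_subset[where fs = fs, OF A \<open>0 < n\<close> cont inv] by blast+
  show "0 \<le> L"
    using lip lipschitz_on_nonneg \<open>0 < n\<close> by blast
  show "0 \<le> hausdorff_metric (?T k) K" for k
    using T K by (intro hausdorff_metric_nonneg)
  show "L < 1" by fact
  fix \<delta> :: real assume "0 < \<delta>"
  have "\<forall>r\<in>{..<n}. \<forall>\<^sub>F i in sequentially. \<forall>x\<in>C. dist (fs r i x) (f r x) < \<delta>"
    using uniform_limitD[OF unif \<open>0 < \<delta>\<close>] by simp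
  then have "\<forall>\<^sub>F i in sequentially. \<forall>r\<in>{..<n}. \<forall>x\<in>C. dist (fs r i x) (f r x) < \<delta>"
    by (rule eventually_ball_finite[OF finite_lessThan])
  then have "\<forall>\<^sub>F k in sequentially. \<forall>r\<in>{..<n}. \<forall>x\<in>C. dist (fs r (Suc k) x) (f r x) < \<delta>"
    by (rule eventually_sequentially_Suc[THEN iffD2])
  then show "\<forall>\<^sub>F k in sequentially.
      hausdorff_metric (?T (Suc k)) K \<le> \<delta> + L * hausdorff_metric (?T k) K"
  proof eventually_elim
    case (elim k)
    have "hausdorff_metric (?T (Suc k)) K
        = hausdorff_metric (set_map n (\<lambda>r. fs r (Suc k)) (?T k)) (set_map n f K)"
      using K by simp
    also have "\<dots> \<le> \<delta> + L * hausdorff_metric (?T k) K"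
    proof (rule hausdorff_metric_set_map_le)
      fix r a b assume "r < n" "a \<in> ?T k" "b \<in> K"
      have "dist (fs r (Suc k) a) (f r b) \<le> dist (fs r (Suc k) a) (f r a) + dist (f r a) (f r b)"
        by (rule dist_triangle)
      also have "\<dots> \<le> \<delta> + L * dist a b"
      proof (rule add_mono)
        have "a \<in> C"
          using T(3) \<open>a \<in> ?T k\<close> by blast
        then show "dist (fs r (Suc k) a) (f r a) \<le> \<delta>"
          using elim \<open>r < n\<close> by (simp add: less_imp_le)
        show "dist (f r a) (f r b) \<le> L * dist a b"
          using lipschitz_onD[OF lip[OF \<open>r < n\<close>]] by simp
      qed
      finally show "dist (fs r (Suc k) a) (f r b) \<le> \<delta> + L * dist a b" .
    qed (use T K \<open>0 < n\<close> \<open>0 \<le> L\<close> in auto)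
    finally show ?case .
  qed
qed

theorem mainTheorem6:
  fixes n :: nat
    and fs :: "nat \<Rightarrow> nat \<Rightarrow> 'a::complete_space \<Rightarrow> 'a"
    and f :: "nat \<Rightarrow> 'a \<Rightarrow> 'a"
    and C :: "'a set"
  assumes n_pos: "n \<ge> 1"
    and fs_lip: "\<And>r i. r < n \<Longrightarrow> i \<ge> 1 \<Longrightarrow> \<exists>L. L-lipschitz_on UNIV (fs r i)"
    and prod_lim: "(\<lambda>k. \<Prod>i\<in>{1..k}. Max ((\<lambda>r. Lip (fs r i)) ` {..<n})) \<longlonglongrightarrow> 0"
    and C_compact: "compact C"
    and C_inv: "\<And>r i. r < n \<Longrightarrow> i \<ge> 1 \<Longrightarrow> fs r i ` C \<subseteq> C"
    and unif: "\<And>r. r < n \<Longrightarrow> uniform_limit C (\<lambda>i. fs r i) (f r) sequentially"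
    and f_lip: "\<And>r. r < n \<Longrightarrow> \<exists>L. L-lipschitz_on UNIV (f r)"
    and contr: "Max ((\<lambda>r. Lip (f r)) ` {..<n}) < 1"
  shows "\<exists>AF. (compact AF \<and> AF \<noteq> {} \<and> set_map n f AF = AF)
           \<and> (\<forall>B. compact B \<and> B \<noteq> {} \<and> set_map n f B = B \<longrightarrow> B = AF)
           \<and> (\<forall>A. compact A \<and> A \<noteq> {} \<and> A \<subseteq> C \<longrightarrow>
                 (\<lambda>k. hausdorff_metric (forward_traj n fs k A) AF) \<longlonglongrightarrow> 0)"
proof -
  define L where "L = Max ((\<lambda>r. Lip (f r)) ` {..<n})"
  have "0 < n" "L < 1"
    using n_pos contr by (simp_all add: L_def)
  have lip: "L-lipschitz_on UNIV (f r)" if "r < n" for r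
    using lipschitz_on_Lip[OF f_lip[OF that]] by (rule lipschitz_on_mono) (use that in \<open>auto simp: L_def\<close>)
  have fs_cont: "continuous_on C (fs r i)" if "r < n" "1 \<le> i" for r i
    using fs_lip[OF that] by (auto intro: lipschitz_on_continuous_on continuous_on_subset)
  obtain K where K: "compact K" "K \<noteq> {}" "set_map n f K = K"
    using set_map_fixed_set_exists[where f = f, OF \<open>0 < n\<close> lip \<open>L < 1\<close>] .
  have "B = K" if "compact B" "B \<noteq> {}" "set_map n f B = B" for B
    using set_map_fixed_set_unique[where f = f, OF that K lip \<open>L < 1\<close>] .
  moreover have "(\<lambda>k. hausdorff_metric (forward_traj n fs k A) K) \<longlonglongrightarrow> 0"
    if "compact A" "A \<noteq> {}" "A \<subseteq> C" for A
    using forward_traj_tendsto_fixed_set[where fs = fs and f = f,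
        OF K that \<open>0 < n\<close> fs_cont C_inv unif lip \<open>L < 1\<close>] .
  ultimately show ?thesis
    using K by blast
qed

end
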